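(* Consider the opinion--action model described in the context with $\phi\in(0,1)$ and arbitrary initial values $x_i(0),y_i(0)\in[0,1]$. Suppose there exists a finite time $T>0$ such that for all integers $t\ge T$ the digraph $\mathcal{G}(P(t))$ is strongly connected. Then for every $i\in\{1,\dots,2n\}$ the limit $z_i^\ast=\lim_{t\to\infty}z_i(t)$ exists, and $z_i^\ast=z_j^\ast$ for all $i,j\in\{1,\dots,2n\}$.
   Context: Fix an integer $n\ge 1$, agent set $\mathcal{V}=\{1,\dots,n\}$, a confidence threshold $\epsilon\in[0,1]$ and a decision weight $\phi\in[0,1]$. Each agent $i$ has opinion $x_i(t)\in[0,1]$ and action $y_i(t)\in[0,1]$. For $t\in\mathbb{Z}_{\ge0}$ the model evolves by: $\mathcal{N}_i(t)=\{j\in\mathcal{V}\mid j\neq i,\ |x_i(t)-y_j(t)|\le\epsilon\}$; $x_i(t+1)=\frac{x_i(t)+\sum_{j\in\mathcal{N}_i(t)}y_j(t)}{|\mathcal{N}_i(t)|+1}$; $y_i(t+1)=\phi\,x_i(t+1)+(1-\phi)\,y_{\mathrm{avg}}(t)$ with $y_{\mathrm{avg}}(t)=\frac1n\sum_{k=1}^n y_k(t)$. For $t\ge1$ the augmented state is $\mathbf{z}(t)\in\mathbb{R}^{2n}$ with $z_i(t)=x_i(t)$ and $z_{n+i}(t)=y_i(t-1)$; it satisfies $\mathbf{z}(t+1)=P(t)\mathbf{z}(t)$, where $P(t)=\begin{bmatrix}P_{11}(t)&P_{12}(t)\\ P_{21}&P_{22}\end{bmatrix}$ with $n\times n$ blocks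 $[P_{11}(t)]_{ij}=\frac{1}{|\mathcal{N}_i(t)|+1}$ if $j=i$, $\frac{\phi}{|\mathcal{N}_i(t)|+1}$ if $j\in\mathcal{N}_i(t)$, $0$ otherwise; $[P_{12}(t)]_{ij}=\frac{(1-\phi)|\mathcal{N}_i(t)|}{(|\mathcal{N}_i(t)|+1)n}$ for all $i,j$; $P_{21}=\phi I_n$; $P_{22}=\frac{1-\phi}{n}\mathbf{1}_n\mathbf{1}_n^\top$. For a nonnegative $A\in\mathbb{R}^{m\times m}$, $\mathcal{G}(A)$ is the digraph on $\{1,\dots,m\}$ with a directed edge from $j$ to $i$ iff $a_{ij}>0$. *)

theory Defs
  imports "HOL-Analysis.Analysis"
begin

text \<open>Agents are indexed 0..n-1 (paper: 1..n). Opinions and actions are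
  functions nat => real, only the values at indices < n matter.\<close>

definition nbrs :: "nat \<Rightarrow> real \<Rightarrow> (nat \<Rightarrow> real) \<Rightarrow> (nat \<Rightarrow> real) \<Rightarrow> nat \<Rightarrow> nat set" where
  "nbrs n eps x y i = {j. j < n \<and> j \<noteq> i \<and> \<bar>x i - y j\<bar> \<le> eps}"

definition yavg :: "nat \<Rightarrow> (nat \<Rightarrow> real) \<Rightarrow> real" where
  "yavg n y = (\<Sum>k<n. y k) / real n"

definition step :: "nat \<Rightarrow> real \<Rightarrow> real \<Rightarrow> (nat \<Rightarrow> real) \<times> (nat \<Rightarrow> real)
    \<Rightarrow> (nat \<Rightarrow> real) \<times> (nat \<Rightarrow> real)" where
  "step n eps phi s =
     (let x = fst s; y = snd s;
          x' = (\<lambda>i. (x i + (\<Sum>j\<in>nbrs n eps x y i. y j)) / (real (card (nbrs n eps x y i)) + 1))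
      in (x', (\<lambda>i. phi * x' i + (1 - phi) * yavg n y)))"

primrec traj :: "nat \<Rightarrow> real \<Rightarrow> real \<Rightarrow> (nat \<Rightarrow> real) \<Rightarrow> (nat \<Rightarrow> real) \<Rightarrow> nat
    \<Rightarrow> (nat \<Rightarrow> real) \<times> (nat \<Rightarrow> real)" where
  "traj n eps phi x0 y0 0 = (x0, y0)"
| "traj n eps phi x0 y0 (Suc t) = step n eps phi (traj n eps phi x0 y0 t)"

definition xs :: "nat \<Rightarrow> real \<Rightarrow> real \<Rightarrow> (nat \<Rightarrow> real) \<Rightarrow> (nat \<Rightarrow> real) \<Rightarrow> nat \<Rightarrow> nat \<Rightarrow> real" where
  "xs n eps phi x0 y0 t = fst (traj n eps phi x0 y0 t)"

definition ys :: "nat \<Rightarrow> real \<Rightarrow> real \<Rightarrow> (nat \<Rightarrow> real) \<Rightarrow> (nat \<Rightarrow> real) \<Rightarrow> nat \<Rightarrow> nat \<Rightarrow> real" where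
  "ys n eps phi x0 y0 t = snd (traj n eps phi x0 y0 t)"

text \<open>Augmented state z(t), indices 0..2n-1: z_k(t) = x_k(t) for k < n,
  z_{n+i}(t) = y_i(t-1). (Meaningful for t >= 1; at t = 0 it uses y(0), irrelevant for limits.)\<close>
definition zs :: "nat \<Rightarrow> real \<Rightarrow> real \<Rightarrow> (nat \<Rightarrow> real) \<Rightarrow> (nat \<Rightarrow> real) \<Rightarrow> nat \<Rightarrow> nat \<Rightarrow> real" where
  "zs n eps phi x0 y0 t k =
     (if k < n then xs n eps phi x0 y0 t k else ys n eps phi x0 y0 (t - 1) (k - n))"

definition Pmat :: "nat \<Rightarrow> real \<Rightarrow> real \<Rightarrow> (nat \<Rightarrow> real) \<Rightarrow> (nat \<Rightarrow> real) \<Rightarrow> nat \<Rightarrow> nat \<Rightarrow> nat \<Rightarrow> real" where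
  "Pmat n eps phi x0 y0 t i j =
     (let N = (\<lambda>a. nbrs n eps (xs n eps phi x0 y0 t) (ys n eps phi x0 y0 t) a) in
      if i < n \<and> j < n then
        (if j = i then 1 / (real (card (N i)) + 1)
         else if j \<in> N i then phi / (real (card (N i)) + 1) else 0)
      else if i < n \<and> n \<le> j \<and> j < 2*n then
        (1 - phi) * real (card (N i)) / ((real (card (N i)) + 1) * real n)
      else if n \<le> i \<and> i < 2*n \<and> j < n then
        (if j = i - n then phi else 0)
      else if n \<le> i \<and> i < 2*n \<and> n \<le> j \<and> j < 2*n then
        (1 - phi) / real n
      else 0)"

definition graph_of :: "nat \<Rightarrow> (nat \<Rightarrow> nat \<Rightarrow> real) \<Rightarrow> (nat \<times> nat) set" where
  "graph_of m A = {(j, i). j < m \<and> i < m \<and> A i j > 0}"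

definition strongly_connected_on :: "nat \<Rightarrow> (nat \<times> nat) set \<Rightarrow> bool" where
  "strongly_connected_on m E = (\<forall>i<m. \<forall>j<m. (i, j) \<in> E\<^sup>*)"

end

theory Submission
  imports Defs
begin

(* For t >= 1 the augmented state evolves by z(t+1) = P(t) z(t), where P(t) is row-stochastic
   with positive diagonal and all positive entries at least d = min phi (1 - phi) / (2 n).
   Under such averaging the largest entry of z never increases and the smallest never
   decreases. Fix a time s with spread D = max - min. The entries that k steps later lie at
   least d^k D below the old maximum stay so (positive self-weights) and drag down every entry
   with an incoming edge from them; by strong connectivity this set gains an entry at each step
   until it is everything. Hence the spread shrinks by the factor 1 - d^(2n) every 2n steps,
   and max and min converge to a common limit that squeezes every entry.
   The bounds on the initial values and on eps are not needed. *)

lemma rtrancl_edge_leaving: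
  assumes "(a, b) \<in> E\<^sup>*" "a \<in> S" "b \<notin> S"
  obtains u v where "(u, v) \<in> E" "u \<in> S" "v \<notin> S"
  using assms by (induction rule: rtrancl_induct) auto

locale averaging_dynamics =
  fixes m :: nat and A :: "nat \<Rightarrow> nat \<Rightarrow> nat \<Rightarrow> real" and w :: "nat \<Rightarrow> nat \<Rightarrow> real"
    and t0 :: nat and d :: real
  assumes dim_pos: "0 < m"
    and d_pos: "0 < d"
    and update: "\<And>t i. t0 \<le> t \<Longrightarrow> i < m \<Longrightarrow> w (Suc t) i = (\<Sum>j<m. A t i j * w t j)"
    and nonneg: "\<And>t i j. t0 \<le> t \<Longrightarrow> i < m \<Longrightarrow> j < m \<Longrightarrow> 0 \<le> A t i j"
    and row_sum: "\<And>t i. t0 \<le> t \<Longrightarrow> i < m \<Longrightarrow> (\<Sum>j<m. A t i j) = 1"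
    and diag_pos: "\<And>t i. t0 \<le> t \<Longrightarrow> i < m \<Longrightarrow> 0 < A t i i"
    and pos_ge: "\<And>t i j. t0 \<le> t \<Longrightarrow> i < m \<Longrightarrow> j < m \<Longrightarrow> 0 < A t i j \<Longrightarrow> d \<le> A t i j"
    and strongly_connected: "\<And>t. t0 \<le> t \<Longrightarrow> strongly_connected_on m (graph_of m (A t))"
begin

lemma d_le_1: "d \<le> 1"
proof -
  have "d \<le> A t0 0 0"
    using pos_ge diag_pos dim_pos by blast
  also have "\<dots> \<le> (\<Sum>j<m. A t0 0 j)"
    by (rule member_le_sum) (use nonneg dim_pos in auto)
  also have "\<dots> = 1"
    using row_sum dim_pos by blast
  finally show ?thesis .
qed

definition wmax :: "nat \<Rightarrow> real" where
  "wmax t = Max (w t ` {..<m})"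

definition wmin :: "nat \<Rightarrow> real" where
  "wmin t = Min (w t ` {..<m})"

definition spread :: "nat \<Rightarrow> real" where
  "spread t = wmax t - wmin t"

lemma le_wmax: "i < m \<Longrightarrow> w t i \<le> wmax t"
  unfolding wmax_def by (rule Max_ge) auto

lemma wmin_le: "i < m \<Longrightarrow> wmin t \<le> w t i"
  unfolding wmin_def by (rule Min_le) auto

lemma wmax_attained:
  obtains i where "i < m" "w t i = wmax t"
proof -
  have "wmax t \<in> w t ` {..<m}"
    unfolding wmax_def using dim_pos by (intro Max_in) auto
  then show ?thesis using that by auto
qed

lemma wmin_attained:
  obtains i where "i < m" "w t i = wmin t"
proof -
  have "wmin t \<in> w t ` {..<m}"
    unfolding wmin_def using dim_pos by (intro Min_in) auto
  then show ?thesis using that by auto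
qed

lemma spread_nonneg: "0 \<le> spread t"
  using le_wmax[OF dim_pos, of t] wmin_le[OF dim_pos, of t] unfolding spread_def by linarith

lemma update_in_interval:
  assumes "t0 \<le> t" "i < m" "\<And>j. j < m \<Longrightarrow> w t j \<in> {lo..hi}"
  shows "w (Suc t) i \<in> {lo..hi}"
  using convex_sum[of "{..<m}" "{lo..hi}" "A t i" "w t"] assms update row_sum nonneg by auto

lemma trajectory_in_range:
  assumes "t0 \<le> s" "j < m"
  shows "w (s + k) j \<in> {wmin s..wmax s}"
  using assms(2)
proof (induction k arbitrary: j)
  case 0
  then show ?case using wmin_le le_wmax by simp
next
  case (Suc k)
  then show ?case using update_in_interval[of "s + k" j "wmin s" "wmax s"] assms(1) by simp
qed

lemma wmax_antimono:
  assumes "t0 \<le> s" "s \<le> s'"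
  shows "wmax s' \<le> wmax s"
proof -
  obtain i where "i < m" "w s' i = wmax s'" by (rule wmax_attained)
  then show ?thesis
    using trajectory_in_range[OF assms(1), of i "s' - s"] assms(2) by simp
qed

lemma wmin_mono:
  assumes "t0 \<le> s" "s \<le> s'"
  shows "wmin s \<le> wmin s'"
proof -
  obtain i where "i < m" "w s' i = wmin s'" by (rule wmin_attained)
  then show ?thesis
    using trajectory_in_range[OF assms(1), of i "s' - s"] assms(2) by simp
qed

lemma spread_antimono: "t0 \<le> s \<Longrightarrow> s \<le> s' \<Longrightarrow> spread s' \<le> spread s"
  unfolding spread_def using wmax_antimono wmin_mono by (meson diff_mono)

lemma update_le_drop:
  assumes "t0 \<le> t" "i < m" "l < m" "0 < A t i l" "0 \<le> e"
    and "\<And>j. j < m \<Longrightarrow> w t j \<le> M" "w t l \<le> M - e"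
  shows "w (Suc t) i \<le> M - d * e"
proof -
  have "w (Suc t) i = (\<Sum>j<m. A t i j * w t j)"
    using update assms by simp
  also have "\<dots> \<le> (\<Sum>j<m. A t i j * M - (if j = l then A t i l * e else 0))"
    by (rule sum_mono)
      (use assms nonneg in \<open>auto intro: mult_left_mono simp: right_diff_distrib[symmetric]\<close>)
  also have "\<dots> = M - A t i l * e"
    using row_sum[OF assms(1,2)] assms(3) by (simp add: sum_subtractf sum_distrib_right[symmetric])
  also have "\<dots> \<le> M - d * e"
    using pos_ge[OF assms(1-4)] assms(5) by (simp add: mult_right_mono)
  finally show ?thesis .
qed

definition lowered :: "nat \<Rightarrow> nat \<Rightarrow> nat set" where
  "lowered s k = {i. i < m \<and> w (s + k) i \<le> wmax s - d ^ k * spread s}"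

lemma lowered_subset: "lowered s k \<subseteq> {..<m}"
  unfolding lowered_def by auto

lemma update_lowered:
  assumes "t0 \<le> s" "u \<in> lowered s k" "v < m" "0 < A (s + k) v u"
  shows "v \<in> lowered s (Suc k)"
proof -
  have "w (Suc (s + k)) v \<le> wmax s - d * (d ^ k * spread s)"
  proof (rule update_le_drop[of _ _ u])
    show "\<And>j. j < m \<Longrightarrow> w (s + k) j \<le> wmax s"
      using trajectory_in_range[OF assms(1)] by simp
    show "0 \<le> d ^ k * spread s"
      using d_pos spread_nonneg by simp
  qed (use assms in \<open>auto simp: lowered_def\<close>)
  then show ?thesis
    using assms(3) by (simp add: lowered_def mult.assoc)
qed

lemma lowered_Suc:
  assumes "t0 \<le> s"
  shows "lowered s k \<subseteq> lowered s (Suc k)"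
proof
  fix i
  assume i: "i \<in> lowered s k"
  then have "i < m"
    using lowered_subset by blast
  then show "i \<in> lowered s (Suc k)"
    using update_lowered[OF assms i] diag_pos[of "s + k" i] assms by simp
qed

lemma lowered_grows:
  assumes "t0 \<le> s" "a \<in> lowered s k" "b < m" "b \<notin> lowered s k"
  shows "lowered s k \<subset> lowered s (Suc k)"
proof -
  have "(a, b) \<in> (graph_of m (A (s + k)))\<^sup>*"
    using strongly_connected[of "s + k"] assms lowered_subset
    unfolding strongly_connected_on_def by auto
  then obtain u v where "(u, v) \<in> graph_of m (A (s + k))" "u \<in> lowered s k" "v \<notin> lowered s k"
    using assms(2,4) by (rule rtrancl_edge_leaving)
  then have "v \<in> lowered s (Suc k)" "v \<notin> lowered s k"
    using update_lowered[OF assms(1)] by (auto simp: graph_of_def)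
  with lowered_Suc[OF assms(1)] show ?thesis
    by auto
qed

lemma card_lowered:
  assumes "t0 \<le> s"
  shows "min m (Suc k) \<le> card (lowered s k)"
proof (induction k)
  case 0
  obtain i where "i < m" "w s i = wmin s"
    by (rule wmin_attained)
  then have "i \<in> lowered s 0"
    by (simp add: lowered_def spread_def)
  then have "card (lowered s 0) \<noteq> 0"
    using finite_subset[OF lowered_subset] by auto
  then show ?case
    by simp
next
  case (Suc k)
  have fin: "finite (lowered s (Suc k))"
    using finite_subset[OF lowered_subset] by blast
  show ?case
  proof (cases "{..<m} \<subseteq> lowered s k")
    case True
    then have "{..<m} \<subseteq> lowered s (Suc k)"
      using lowered_Suc[OF assms] by blast
    then have "card {..<m} \<le> card (lowered s (Suc k))"
      by (rule card_mono[OF fin])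
    then show ?thesis
      by simp
  next
    case False
    then obtain b where b: "b < m" "b \<notin> lowered s k"
      by auto
    have "card (lowered s k) \<noteq> 0"
      using Suc.IH dim_pos by linarith
    then obtain a where "a \<in> lowered s k"
      by (metis card.empty ex_in_conv)
    then have "lowered s k \<subset> lowered s (Suc k)"
      using lowered_grows[OF assms _ b] by blast
    then have "card (lowered s k) < card (lowered s (Suc k))"
      by (rule psubset_card_mono[OF fin])
    then show ?thesis
      using Suc.IH by simp
  qed
qed

lemma lowered_all:
  assumes "t0 \<le> s"
  shows "lowered s m = {..<m}"
proof (rule card_subset_eq)
  show "card (lowered s m) = card {..<m}"
    using card_lowered[OF assms, of m] card_mono[OF _ lowered_subset, of s m] by simp
qed (simp_all add: lowered_subset)

lemma contraction_factor_bounds: "0 \<le> 1 - d ^ m" "1 - d ^ m < 1"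
  using d_pos d_le_1 by (simp_all add: power_le_one)

lemma spread_contracts:
  assumes "t0 \<le> s"
  shows "spread (s + m) \<le> (1 - d ^ m) * spread s"
proof -
  obtain i where i: "i < m" "w (s + m) i = wmax (s + m)"
    by (rule wmax_attained)
  then have "i \<in> lowered s m"
    using lowered_all[OF assms] by simp
  then have "wmax (s + m) \<le> wmax s - d ^ m * spread s"
    using i by (simp add: lowered_def)
  moreover have "wmin s \<le> wmin (s + m)"
    using wmin_mono[OF assms] by simp
  moreover have "(1 - d ^ m) * spread s = spread s - d ^ m * spread s"
    by (simp add: left_diff_distrib)
  ultimately show ?thesis
    unfolding spread_def by linarith
qed

lemma spread_geometric: "spread (t0 + k * m) \<le> (1 - d ^ m) ^ k * spread t0"
proof (induction k)
  case (Suc k)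
  have "spread (t0 + Suc k * m) = spread ((t0 + k * m) + m)"
    by (simp add: algebra_simps)
  also have "\<dots> \<le> (1 - d ^ m) * spread (t0 + k * m)"
    by (rule spread_contracts) simp
  also have "\<dots> \<le> (1 - d ^ m) * ((1 - d ^ m) ^ k * spread t0)"
    using Suc contraction_factor_bounds(1) by (rule mult_left_mono)
  finally show ?case
    by simp
qed simp

lemma spread_tendsto_0: "spread \<longlonglongrightarrow> 0"
proof (rule LIMSEQ_I)
  fix r :: real
  assume "0 < r"
  have "(\<lambda>k. (1 - d ^ m) ^ k * spread t0) \<longlonglongrightarrow> 0"
    using contraction_factor_bounds by (intro tendsto_mult_left_zero LIMSEQ_realpow_zero)
  with \<open>0 < r\<close> obtain K where "\<forall>k\<ge>K. norm ((1 - d ^ m) ^ k * spread t0 - 0) < r"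
    by (blast dest: LIMSEQ_D)
  then have K: "(1 - d ^ m) ^ K * spread t0 < r"
    by auto
  have "norm (spread t - 0) < r" if "t0 + K * m \<le> t" for t
  proof -
    have "spread t \<le> spread (t0 + K * m)"
      using spread_antimono that by simp
    then show ?thesis
      using spread_geometric[of K] spread_nonneg[of t] K by simp
  qed
  then show "\<exists>T. \<forall>t\<ge>T. norm (spread t - 0) < r"
    by blast
qed

theorem consensus: "\<exists>L. \<forall>k<m. (\<lambda>t. w t k) \<longlonglongrightarrow> L"
proof -
  have "decseq (\<lambda>t. wmax (t + t0))"
    by (rule decseq_SucI) (simp add: wmax_antimono)
  moreover have "wmin t0 \<le> wmax (t + t0)" for t
    using wmin_mono[of t0 "t + t0"] spread_nonneg[of "t + t0"] by (simp add: spread_def)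
  ultimately obtain L where "(\<lambda>t. wmax (t + t0)) \<longlonglongrightarrow> L"
    by (metis decseq_convergent)
  then have wmax_lim: "wmax \<longlonglongrightarrow> L"
    by (rule LIMSEQ_offset)
  then have "(\<lambda>t. wmax t - spread t) \<longlonglongrightarrow> L - 0"
    by (intro tendsto_diff spread_tendsto_0)
  then have wmin_lim: "wmin \<longlonglongrightarrow> L"
    by (simp add: spread_def)
  have "(\<lambda>t. w t k) \<longlonglongrightarrow> L" if "k < m" for k
    by (rule real_tendsto_sandwich[OF _ _ wmin_lim wmax_lim]) (use that wmin_le le_wmax in auto)
  then show ?thesis
    by blast
qed

end

lemma sum_lessThan_double:
  fixes g :: "nat \<Rightarrow> 'a::comm_monoid_add"
  shows "(\<Sum>j<2 * n. g j) = (\<Sum>j<n. g j) + (\<Sum>k<n. g (n + k))"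
proof -
  have "(\<Sum>j<2 * n. g j) = (\<Sum>j<n. g j) + (\<Sum>j\<in>{n..<n + n}. g j)"
    using sum.atLeastLessThan_concat[of 0 n "n + n" g] by (simp add: atLeast0LessThan mult_2)
  also have "(\<Sum>j\<in>{n..<n + n}. g j) = (\<Sum>k<n. g (n + k))"
    using sum.shift_bounds_nat_ivl[of g 0 n n] by (simp add: atLeast0LessThan add.commute)
  finally show ?thesis .
qed

lemma less_double_cases:
  fixes i n :: nat
  assumes "i < 2 * n"
  obtains "i < n" | k where "k < n" "i = n + k"
  using assms by (metis add_diff_inverse_nat mult_2 nat_add_left_cancel_less)

lemma sum_self_and_nbrs:
  fixes v :: "'b \<Rightarrow> 'a::comm_semiring_0"
  assumes "finite I" "i \<in> I" "M \<subseteq> I" "i \<notin> M"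
  shows "(\<Sum>j\<in>I. (if j = i then a else if j \<in> M then b else 0) * v j)
    = a * v i + b * (\<Sum>j\<in>M. v j)"
proof -
  have "(\<Sum>j\<in>I. (if j = i then a else if j \<in> M then b else 0) * v j)
      = (\<Sum>j\<in>I. if j = i then a * v j else 0) + (\<Sum>j\<in>I. if j \<in> M then b * v j else 0)"
    unfolding sum.distrib[symmetric] by (rule sum.cong) (use assms in auto)
  also have "\<dots> = a * v i + b * (\<Sum>j\<in>M. v j)"
    using assms by (simp add: sum.If_cases Int_absorb1 sum_distrib_left)
  finally show ?thesis .
qed

lemma nbrs_subset: "nbrs n eps x y i \<subseteq> {..<n}"
  unfolding nbrs_def by auto

lemma self_notin_nbrs: "i \<notin> nbrs n eps x y i"
  unfolding nbrs_def by auto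

lemma card_nbrs_le: "card (nbrs n eps x y i) \<le> n"
  using card_mono[OF _ nbrs_subset] by fastforce

locale opinion_action =
  fixes n :: nat and eps phi :: real and x0 y0 :: "nat \<Rightarrow> real"
begin

abbreviation X :: "nat \<Rightarrow> nat \<Rightarrow> real" where "X \<equiv> xs n eps phi x0 y0"
abbreviation Y :: "nat \<Rightarrow> nat \<Rightarrow> real" where "Y \<equiv> ys n eps phi x0 y0"
abbreviation Z :: "nat \<Rightarrow> nat \<Rightarrow> real" where "Z \<equiv> zs n eps phi x0 y0"
abbreviation P :: "nat \<Rightarrow> nat \<Rightarrow> nat \<Rightarrow> real" where "P \<equiv> Pmat n eps phi x0 y0"
abbreviation N :: "nat \<Rightarrow> nat \<Rightarrow> nat set" where "N t i \<equiv> nbrs n eps (X t) (Y t) i"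
abbreviation deg :: "nat \<Rightarrow> nat \<Rightarrow> real" where "deg t i \<equiv> real (card (N t i))"

lemma xs_Suc: "X (Suc t) i = (X t i + (\<Sum>j\<in>N t i. Y t j)) / (deg t i + 1)"
  by (simp add: xs_def ys_def step_def Let_def)

lemma ys_Suc: "Y (Suc t) i = phi * X (Suc t) i + (1 - phi) * yavg n (Y t)"
  by (simp add: xs_def ys_def step_def Let_def)

lemma Pmat_upper_left: "i < n \<Longrightarrow> j < n \<Longrightarrow>
    P t i j = (if j = i then 1 else if j \<in> N t i then phi else 0) / (deg t i + 1)"
  by (simp add: Pmat_def Let_def)

lemma Pmat_upper_right: "i < n \<Longrightarrow> k < n \<Longrightarrow>
    P t i (n + k) = (1 - phi) * deg t i / ((deg t i + 1) * n)"
  by (simp add: Pmat_def Let_def)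

lemma Pmat_lower_left: "i < n \<Longrightarrow> j < n \<Longrightarrow> P t (n + i) j = (if j = i then phi else 0)"
  by (simp add: Pmat_def Let_def)

lemma Pmat_lower_right: "i < n \<Longrightarrow> k < n \<Longrightarrow> P t (n + i) (n + k) = (1 - phi) / n"
  by (simp add: Pmat_def Let_def)

lemma Pmat_upper_mult:
  assumes "i < n"
  shows "(\<Sum>j<2 * n. P t i j * z j) = (z i + phi * (\<Sum>j\<in>N t i. z j)
    + (1 - phi) * deg t i * ((\<Sum>k<n. z (n + k)) / n)) / (deg t i + 1)"
proof -
  have "(\<Sum>j<n. P t i j * z j)
      = (\<Sum>j<n. (if j = i then 1 / (deg t i + 1) else if j \<in> N t i then phi / (deg t i + 1) else 0) * z j)"
    by (rule sum.cong) (simp_all add: Pmat_upper_left assms)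
  also have "\<dots> = 1 / (deg t i + 1) * z i + phi / (deg t i + 1) * (\<Sum>j\<in>N t i. z j)"
    using assms nbrs_subset self_notin_nbrs by (intro sum_self_and_nbrs) auto
  finally have upper_left: "(\<Sum>j<n. P t i j * z j) = \<dots>" .
  have upper_right: "(\<Sum>k<n. P t i (n + k) * z (n + k))
      = (1 - phi) * deg t i / ((deg t i + 1) * n) * (\<Sum>k<n. z (n + k))"
    unfolding sum_distrib_left by (rule sum.cong) (simp_all add: Pmat_upper_right assms)
  show ?thesis
    unfolding sum_lessThan_double upper_left upper_right by (simp add: add_divide_distrib)
qed

lemma Pmat_lower_mult:
  assumes "i < n"
  shows "(\<Sum>j<2 * n. P t (n + i) j * z j) = phi * z i + (1 - phi) * ((\<Sum>k<n. z (n + k)) / n)"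
proof -
  have "(\<Sum>j<n. P t (n + i) j * z j) = (\<Sum>j<n. if j = i then phi * z j else 0)"
    by (rule sum.cong) (simp_all add: Pmat_lower_left assms)
  moreover have "(\<Sum>k<n. P t (n + i) (n + k) * z (n + k)) = (1 - phi) / n * (\<Sum>k<n. z (n + k))"
    unfolding sum_distrib_left by (rule sum.cong) (simp_all add: Pmat_lower_right assms)
  ultimately show ?thesis
    using assms by (simp add: sum_lessThan_double)
qed

lemma Pmat_row_sum:
  assumes "i < 2 * n"
  shows "(\<Sum>j<2 * n. P t i j) = 1"
  using assms
proof (cases rule: less_double_cases)
  case 1
  have "1 + phi * deg t i + (1 - phi) * deg t i = deg t i + 1"
    by (simp add: algebra_simps)
  with 1 show ?thesis
    using Pmat_upper_mult[OF 1, of t "\<lambda>_. 1"] by simp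
next
  case (2 k)
  then show ?thesis
    using Pmat_lower_mult[OF 2(1), of t "\<lambda>_. 1"] by simp
qed

lemma Pmat_nonneg: "0 \<le> phi \<Longrightarrow> phi \<le> 1 \<Longrightarrow> 0 \<le> P t i j"
  by (simp add: Pmat_def Let_def)

lemma Pmat_diag_pos:
  assumes "phi < 1" "i < 2 * n"
  shows "0 < P t i i"
  using assms(2)
proof (cases rule: less_double_cases)
  case 1
  then show ?thesis
    by (simp add: Pmat_upper_left add_pos_nonneg)
next
  case (2 k)
  then show ?thesis
    using assms(1) Pmat_lower_right[of k k t] by simp
qed

lemma zs_Suc:
  assumes "1 \<le> t" "i < 2 * n"
  shows "Z (Suc t) i = (\<Sum>j<2 * n. P t i j * Z t j)"
proof -
  obtain s where t: "t = Suc s"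
    using assms(1) by (cases t) auto
  have Z_upper: "Z t j = X t j" if "j < n" for j
    using that by (simp add: zs_def)
  have Z_lower: "Z t (n + k) = Y s k" for k
    by (simp add: zs_def t)
  have Y_t: "Y t j = phi * X t j + (1 - phi) * yavg n (Y s)" for j
    by (simp add: t ys_Suc)
  from assms(2) show ?thesis
  proof (cases rule: less_double_cases)
    case 1
    have "(\<Sum>j\<in>N t i. Z t j) = (\<Sum>j\<in>N t i. X t j)"
      using nbrs_subset[of n eps "X t" "Y t" i] Z_upper by (intro sum.cong) auto
    then have "(\<Sum>j\<in>N t i. Y t j) = phi * (\<Sum>j\<in>N t i. Z t j) + (1 - phi) * deg t i * yavg n (Y s)"
      by (simp add: Y_t sum.distrib sum_distrib_left)
    moreover have "Z (Suc t) i = X (Suc t) i"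
      using 1 by (simp add: zs_def)
    ultimately show ?thesis
      using 1 by (simp add: Pmat_upper_mult xs_Suc Z_upper Z_lower yavg_def)
  next
    case (2 k)
    have "Z (Suc t) (n + k) = Y t k"
      by (simp add: zs_def)
    with 2 show ?thesis
      by (simp add: Pmat_lower_mult Z_upper Z_lower Y_t yavg_def)
  qed
qed

lemma Pmat_upper_right_ge:
  assumes "phi < 1" "i < n" "k < n" "0 < P t i (n + k)"
  shows "(1 - phi) / (2 * n) \<le> P t i (n + k)"
proof -
  have "1 \<le> deg t i"
    using assms(2-4) by (cases "card (N t i) = 0") (auto simp: Pmat_upper_right)
  then have "1 / 2 \<le> deg t i / (deg t i + 1)"
    by (simp add: field_simps)
  then have "(1 - phi) * (1 / 2) / n \<le> (1 - phi) * (deg t i / (deg t i + 1)) / n"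
    using assms(1) by (intro divide_right_mono mult_left_mono) auto
  with assms(2,3) show ?thesis
    by (simp add: Pmat_upper_right)
qed

lemma Pmat_pos_ge:
  assumes "0 < phi" "phi < 1" "i < 2 * n" "j < 2 * n" "0 < P t i j"
  shows "min phi (1 - phi) / (2 * n) \<le> P t i j"
proof -
  define \<mu> where "\<mu> = min phi (1 - phi)"
  have \<mu>: "0 \<le> \<mu>" "\<mu> \<le> phi" "\<mu> \<le> 1 - phi" "\<mu> \<le> 1"
    using assms(1,2) by (auto simp: \<mu>_def)
  have n: "1 \<le> real n"
    using assms(3) by simp
  have bound: "\<mu> / (2 * n) \<le> a / b" if "\<mu> \<le> a" "0 < b" "b \<le> 2 * n" for a b :: real
    using \<mu>(1) that by (intro frac_le) auto
  from assms(3,4) consider (UL) "i < n" "j < n"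
    | (UR) k where "i < n" "k < n" "j = n + k"
    | (LL) i' where "i' < n" "i = n + i'" "j < n"
    | (LR) i' k where "i' < n" "i = n + i'" "k < n" "j = n + k"
    by (metis less_double_cases)
  then have "\<mu> / (2 * n) \<le> P t i j"
  proof cases
    case UL
    have "deg t i + 1 \<le> 2 * n"
      using card_nbrs_le[of n eps "X t" "Y t" i] n by linarith
    then show ?thesis
      using assms(5) \<mu> bound[of _ "deg t i + 1"] UL
      by (auto simp: Pmat_upper_left split: if_splits)
  next
    case (UR k)
    then show ?thesis
      using Pmat_upper_right_ge[of i k t] assms(2,5) \<mu> bound[of "1 - phi" "2 * n"] n by simp
  next
    case (LL i')
    then show ?thesis
      using assms(5) \<mu> bound[of phi 1] n by (auto simp: Pmat_lower_left split: if_splits)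
  next
    case (LR i' k)
    then show ?thesis
      using \<mu> bound[of "1 - phi" n] n by (simp add: Pmat_lower_right)
  qed
  then show ?thesis
    by (simp add: \<mu>_def)
qed

end

theorem proposition2:
  fixes n :: nat and eps phi :: real and x0 y0 :: "nat \<Rightarrow> real" and T :: nat
  assumes "n \<ge> 1"
    and "0 \<le> eps" "eps \<le> 1"
    and "0 < phi" "phi < 1"
    and "\<And>i. i < n \<Longrightarrow> 0 \<le> x0 i \<and> x0 i \<le> 1"
    and "\<And>i. i < n \<Longrightarrow> 0 \<le> y0 i \<and> y0 i \<le> 1"
    and "T > 0"
    and "\<And>t. t \<ge> T \<Longrightarrow>
           strongly_connected_on (2*n) (graph_of (2*n) (Pmat n eps phi x0 y0 t))"
  shows "(\<forall>k < 2*n. convergent (\<lambda>t. zs n eps phi x0 y0 t k)) \<and>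
         (\<forall>i < 2*n. \<forall>j < 2*n.
            lim (\<lambda>t. zs n eps phi x0 y0 t i) = lim (\<lambda>t. zs n eps phi x0 y0 t j))"
proof -
  interpret opinion_action n eps phi x0 y0 .
  interpret averaging_dynamics "2 * n" P Z T "min phi (1 - phi) / (2 * n)"
  proof unfold_locales
    show "0 < 2 * n" "0 < min phi (1 - phi) / (2 * n)"
      using assms(1,4,5) by auto
    show "Z (Suc t) i = (\<Sum>j<2 * n. P t i j * Z t j)" if "T \<le> t" "i < 2 * n" for t i
      using zs_Suc that assms(8) by simp
    show "0 \<le> P t i j" for t i j
      using Pmat_nonneg assms(4,5) by simp
  qed (use assms Pmat_row_sum Pmat_diag_pos Pmat_pos_ge in \<open>auto simp: strongly_connected_on_def\<close>)
  obtain L where "\<forall>k<2 * n. (\<lambda>t. Z t k) \<longlonglongrightarrow> L"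
    using consensus by blast
  then have "convergent (\<lambda>t. Z t k)" "lim (\<lambda>t. Z t k) = L"
    if "k < 2 * n" for k
    using that by (auto simp: convergent_def limI)
  then show ?thesis
    by simp
qed

end
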